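(* Let $N\ge1$, $K\ge2$ be integers with $K$ even and $N$ divisible by $K$, and consider the constant-sum game $\mathcal{B}_1(N,K)$. A pure strategy $s\in S$ is used with positive probability in some Nash equilibrium of $\mathcal{B}_1(N,K)$ (i.e., there exist a Nash equilibrium $(\sigma^A,\sigma^B)$ and a player $i$ with $\sigma^i(s)>0$) if and only if $s_k\le 2N/K$ for every battlefield $k\in\{1,\ldots,K\}$.
   Context: Fix integers $N\ge1$, $K\ge2$ and a real number $\alpha$. The Colonel Blotto game $\mathcal{B}_\alpha(N,K)$ is the two-player simultaneous-move game with players $A,B$, each with pure strategy set $S=\{s\in\{0,1,\ldots,N\}^K:\sum_{k=1}^K s_k=N\}$, in which the payoff of player $i$ at the pure profile $(s^i,s^{-i})$ is $\pi^i(s^i,s^{-i})=\sum_{k=1}^K\big(\mathbf 1[s^i_k>s^{-i}_k]+\tfrac{\alpha}{2}\mathbf 1[s^i_k=s^{-i}_k]\big)$. For $\alpha=1$ the payoffs of the two players always sum to $K$. Mixed strategies are probability distributions on $S$, with expected payoffs under independent randomization; a Nash equilibrium is a mixed profile from which no unilateral deviation raises a player's expected payoff. *)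

theory Defs
  imports Main "HOL-Library.Extended_Real" Complex_Main
begin

text \<open>Battlefields are indexed 0..K-1. A pure strategy is an allocation
  s :: nat => nat, zero outside the battlefields, summing to N.\<close>

definition blotto_S :: "nat \<Rightarrow> nat \<Rightarrow> (nat \<Rightarrow> nat) set" where
  "blotto_S N K = {s. (\<forall>k. K \<le> k \<longrightarrow> s k = 0) \<and> (\<Sum>k<K. s k) = N}"

definition blotto_payoff :: "real \<Rightarrow> nat \<Rightarrow> (nat \<Rightarrow> nat) \<Rightarrow> (nat \<Rightarrow> nat) \<Rightarrow> real" where
  "blotto_payoff \<alpha> K s t =
     (\<Sum>k<K. (if s k > t k then 1 else 0) + \<alpha> / 2 * (if s k = t k then 1 else 0))"

definition mixed :: "nat \<Rightarrow> nat \<Rightarrow> ((nat \<Rightarrow> nat) \<Rightarrow> real) \<Rightarrow> bool" where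
  "mixed N K \<sigma> \<longleftrightarrow> (\<forall>s. 0 \<le> \<sigma> s) \<and> (\<forall>s. s \<notin> blotto_S N K \<longrightarrow> \<sigma> s = 0)
      \<and> (\<Sum>s\<in>blotto_S N K. \<sigma> s) = 1"

definition exp_payoff :: "real \<Rightarrow> nat \<Rightarrow> nat \<Rightarrow> ((nat \<Rightarrow> nat) \<Rightarrow> real) \<Rightarrow> ((nat \<Rightarrow> nat) \<Rightarrow> real) \<Rightarrow> real" where
  "exp_payoff \<alpha> N K \<sigma> \<tau> =
     (\<Sum>s\<in>blotto_S N K. \<Sum>t\<in>blotto_S N K. \<sigma> s * \<tau> t * blotto_payoff \<alpha> K s t)"

definition nash :: "real \<Rightarrow> nat \<Rightarrow> nat \<Rightarrow> ((nat \<Rightarrow> nat) \<Rightarrow> real) \<Rightarrow> ((nat \<Rightarrow> nat) \<Rightarrow> real) \<Rightarrow> bool" where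
  "nash \<alpha> N K \<sigma>A \<sigma>B \<longleftrightarrow> mixed N K \<sigma>A \<and> mixed N K \<sigma>B
     \<and> (\<forall>\<sigma>'. mixed N K \<sigma>' \<longrightarrow> exp_payoff \<alpha> N K \<sigma>' \<sigma>B \<le> exp_payoff \<alpha> N K \<sigma>A \<sigma>B)
     \<and> (\<forall>\<sigma>'. mixed N K \<sigma>' \<longrightarrow> exp_payoff \<alpha> N K \<sigma>' \<sigma>A \<le> exp_payoff \<alpha> N K \<sigma>B \<sigma>A)"

end

theory Submission
  imports Defs "HOL-Library.FuncSet"
begin

text \<open>Let L = 2N/K. Call allocations c 0, \<dots>, c L a Latin family if on every battlefield
  their values run through 0, \<dots>, L. Against the uniform mixture over such a family an
  allocation t collects, battlefield by battlefield, min (t k + 1/2, L + 1) / (L + 1), so its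
  expected payoff is at most (N + K/2) / (L + 1) = K/2, with strict inequality as soon as some
  t k exceeds L. Since the game is constant-sum with value K/2, the mixture is an equilibrium
  strategy, and an allocation exceeding L anywhere is a strictly worse reply to it, hence is
  never played in equilibrium.

  Conversely, every allocation s bounded by L is the first member of a Latin family. Pair the
  battlefields 2m and 2m+1 and let row u give them the j-th and the (L-1-j)-th element of
  {0..L} - {s k}. The pair then sums to L except on a cyclic window of |s (2m) + s (2m+1) - L|
  rows, where it is off by one; laying the windows of the pairs with a surplus end to end
  around the cycle of rows, and likewise those with a deficit, makes the errors cancel in
  every row, because the total surplus equals the total deficit.\<close>

section \<open>The constant-sum game\<close>

lemma finite_blotto_S: "finite (blotto_S N K)"
proof -
  have "blotto_S N K \<subseteq> (\<lambda>g k. if k < K then g k else 0) ` ({..<K} \<rightarrow>\<^sub>E {..N})"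
  proof
    fix s assume s: "s \<in> blotto_S N K"
    hence zero: "\<forall>k. K \<le> k \<longrightarrow> s k = 0" and total: "(\<Sum>k<K. s k) = N"
      by (auto simp: blotto_S_def)
    have "s k \<le> N" if "k < K" for k
      using member_le_sum[of k "{..<K}" s] that total by auto
    hence "restrict s {..<K} \<in> {..<K} \<rightarrow>\<^sub>E {..N}" by auto
    moreover have "s = (\<lambda>k. if k < K then restrict s {..<K} k else 0)"
      using zero by (auto simp: fun_eq_iff)
    ultimately show "s \<in> (\<lambda>g k. if k < K then g k else 0) ` ({..<K} \<rightarrow>\<^sub>E {..N})" by blast
  qed
  thus ?thesis by (rule finite_subset) (simp add: finite_PiE)
qed

lemma blotto_payoff_constant_sum: "blotto_payoff 1 K s t + blotto_payoff 1 K t s = real K"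
proof -
  have "blotto_payoff 1 K s t + blotto_payoff 1 K t s = (\<Sum>k<K. 1)"
    unfolding blotto_payoff_def sum.distrib[symmetric] by (rule sum.cong) auto
  thus ?thesis by simp
qed

definition pure_payoff :: "real \<Rightarrow> nat \<Rightarrow> nat \<Rightarrow> ((nat \<Rightarrow> nat) \<Rightarrow> real) \<Rightarrow> (nat \<Rightarrow> nat) \<Rightarrow> real" where
  "pure_payoff \<alpha> N K \<rho> t = (\<Sum>t'\<in>blotto_S N K. \<rho> t' * blotto_payoff \<alpha> K t t')"

lemma exp_payoff_eq_sum_pure_payoff:
  "exp_payoff \<alpha> N K \<sigma> \<rho> = (\<Sum>t\<in>blotto_S N K. \<sigma> t * pure_payoff \<alpha> N K \<rho> t)"
  unfolding exp_payoff_def pure_payoff_def by (simp add: sum_distrib_left mult.assoc)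

lemma mixed_sum_mult: "mixed N K \<sigma> \<Longrightarrow> (\<Sum>t\<in>blotto_S N K. \<sigma> t * c) = c"
  by (simp add: mixed_def flip: sum_distrib_right)

lemma exp_payoff_constant_sum:
  assumes "mixed N K \<sigma>" "mixed N K \<rho>"
  shows "exp_payoff 1 N K \<sigma> \<rho> + exp_payoff 1 N K \<rho> \<sigma> = real K"
proof -
  let ?S = "blotto_S N K"
  have "exp_payoff 1 N K \<rho> \<sigma> = (\<Sum>s\<in>?S. \<Sum>t\<in>?S. \<sigma> s * \<rho> t * blotto_payoff 1 K t s)"
    unfolding exp_payoff_def by (subst sum.swap) (simp add: mult.commute mult.left_commute)
  hence "exp_payoff 1 N K \<sigma> \<rho> + exp_payoff 1 N K \<rho> \<sigma>
      = (\<Sum>s\<in>?S. \<Sum>t\<in>?S. \<sigma> s * \<rho> t * (blotto_payoff 1 K s t + blotto_payoff 1 K t s))"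
    by (simp add: exp_payoff_def distrib_left sum.distrib)
  also have "\<dots> = (\<Sum>s\<in>?S. \<sigma> s * (\<Sum>t\<in>?S. \<rho> t * real K))"
    by (simp add: blotto_payoff_constant_sum sum_distrib_left mult.assoc)
  also have "\<dots> = real K"
    using assms by (simp add: mixed_sum_mult)
  finally show ?thesis .
qed

lemma exp_payoff_le_if_pure_payoff_le:
  assumes "mixed N K \<sigma>" "\<And>t. t \<in> blotto_S N K \<Longrightarrow> pure_payoff \<alpha> N K \<rho> t \<le> c"
  shows "exp_payoff \<alpha> N K \<sigma> \<rho> \<le> c"
proof -
  have "exp_payoff \<alpha> N K \<sigma> \<rho> \<le> (\<Sum>t\<in>blotto_S N K. \<sigma> t * c)"
    unfolding exp_payoff_eq_sum_pure_payoff
    using assms by (intro sum_mono mult_left_mono) (auto simp: mixed_def)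
  thus ?thesis using assms(1) by (simp add: mixed_sum_mult)
qed

lemma exp_payoff_less_if_pure_payoff_less:
  assumes "mixed N K \<sigma>" "\<And>t. t \<in> blotto_S N K \<Longrightarrow> pure_payoff \<alpha> N K \<rho> t \<le> c"
    and "s \<in> blotto_S N K" "0 < \<sigma> s" "pure_payoff \<alpha> N K \<rho> s < c"
  shows "exp_payoff \<alpha> N K \<sigma> \<rho> < c"
proof -
  have "exp_payoff \<alpha> N K \<sigma> \<rho> < (\<Sum>t\<in>blotto_S N K. \<sigma> t * c)"
    unfolding exp_payoff_eq_sum_pure_payoff
  proof (rule sum_strict_mono_ex1[OF finite_blotto_S])
    show "\<forall>t\<in>blotto_S N K. \<sigma> t * pure_payoff \<alpha> N K \<rho> t \<le> \<sigma> t * c"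
      using assms by (auto intro: mult_left_mono simp: mixed_def)
    show "\<exists>t\<in>blotto_S N K. \<sigma> t * pure_payoff \<alpha> N K \<rho> t < \<sigma> t * c"
      using assms by (auto intro!: bexI[of _ s])
  qed
  thus ?thesis using assms(1) by (simp add: mixed_sum_mult)
qed

lemma nash_swap: "nash \<alpha> N K \<sigma>A \<sigma>B \<Longrightarrow> nash \<alpha> N K \<sigma>B \<sigma>A"
  by (auto simp: nash_def)

lemma nash_if_pure_payoff_le_half:
  assumes "mixed N K \<tau>" "\<And>t. t \<in> blotto_S N K \<Longrightarrow> pure_payoff 1 N K \<tau> t \<le> real K / 2"
  shows "nash 1 N K \<tau> \<tau>"
proof -
  have "exp_payoff 1 N K \<tau> \<tau> = real K / 2"
    using exp_payoff_constant_sum[OF assms(1) assms(1)] by simp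
  hence "exp_payoff 1 N K \<sigma>' \<tau> \<le> exp_payoff 1 N K \<tau> \<tau>" if "mixed N K \<sigma>'" for \<sigma>'
    using exp_payoff_le_if_pure_payoff_le[OF that assms(2)] by simp
  thus ?thesis
    using assms(1) by (simp add: nash_def)
qed

text \<open>Guaranteeing \<tau> against both players forces both equilibrium payoffs to be K/2, so
  \<sigma>A must itself score K/2 against \<tau>, which it cannot if it plays the worse reply s.\<close>
lemma nash_zero_if_pure_payoff_less_half:
  assumes nash: "nash 1 N K \<sigma>A \<sigma>B" and \<tau>: "mixed N K \<tau>"
    and le: "\<And>t. t \<in> blotto_S N K \<Longrightarrow> pure_payoff 1 N K \<tau> t \<le> real K / 2"
    and s: "s \<in> blotto_S N K" "pure_payoff 1 N K \<tau> s < real K / 2"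
  shows "\<sigma>A s = 0"
proof (rule ccontr)
  assume "\<sigma>A s \<noteq> 0"
  moreover have A: "mixed N K \<sigma>A" and B: "mixed N K \<sigma>B"
    and "exp_payoff 1 N K \<tau> \<sigma>B \<le> exp_payoff 1 N K \<sigma>A \<sigma>B"
    and "exp_payoff 1 N K \<tau> \<sigma>A \<le> exp_payoff 1 N K \<sigma>B \<sigma>A"
    using nash \<tau> by (auto simp: nash_def)
  ultimately have "exp_payoff 1 N K \<sigma>A \<tau> < real K / 2"
    using le s by (intro exp_payoff_less_if_pure_payoff_less) (auto simp: mixed_def order.not_eq_order_implies_strict)
  moreover have "exp_payoff 1 N K \<sigma>B \<tau> \<le> real K / 2"
    using B le by (rule exp_payoff_le_if_pure_payoff_le)
  ultimately show False
    using exp_payoff_constant_sum[OF A B] exp_payoff_constant_sum[OF \<tau> A]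
      exp_payoff_constant_sum[OF \<tau> B] \<open>exp_payoff 1 N K \<tau> \<sigma>B \<le> _\<close> \<open>exp_payoff 1 N K \<tau> \<sigma>A \<le> _\<close>
    by linarith
qed

section \<open>Uniform mixtures over Latin families\<close>

definition latin_family :: "nat \<Rightarrow> nat \<Rightarrow> nat \<Rightarrow> (nat \<Rightarrow> nat \<Rightarrow> nat) \<Rightarrow> bool" where
  "latin_family N K L c \<longleftrightarrow>
     (\<forall>u\<le>L. c u \<in> blotto_S N K) \<and> (\<forall>k<K. bij_betw (\<lambda>u. c u k) {..L} {..L})"

definition uniform_mixture :: "nat \<Rightarrow> (nat \<Rightarrow> nat \<Rightarrow> nat) \<Rightarrow> (nat \<Rightarrow> nat) \<Rightarrow> real" where
  "uniform_mixture L c t = real (card {u. u \<le> L \<and> c u = t}) / (real L + 1)"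

lemma sum_uniform_mixture:
  assumes "\<forall>u\<le>L. c u \<in> blotto_S N K"
  shows "(\<Sum>t\<in>blotto_S N K. uniform_mixture L c t * f t) = (\<Sum>u\<le>L. f (c u)) / (real L + 1)"
proof -
  have "(\<Sum>t\<in>blotto_S N K. \<Sum>u\<in>{u. u \<in> {..L} \<and> c u = t}. f (c u)) = (\<Sum>u\<le>L. f (c u))"
    by (rule sum.group) (use assms finite_blotto_S in auto)
  moreover have "(\<Sum>u\<in>{u. u \<in> {..L} \<and> c u = t}. f (c u)) = real (card {u. u \<le> L \<and> c u = t}) * f t" for t
    by simp
  ultimately show ?thesis
    by (simp add: uniform_mixture_def mult.commute flip: sum_divide_distrib)
qed

lemma mixed_uniform_mixture:
  assumes "\<forall>u\<le>L. c u \<in> blotto_S N K"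
  shows "mixed N K (uniform_mixture L c)"
  unfolding mixed_def
proof (intro conjI allI impI)
  show "0 \<le> uniform_mixture L c t" for t
    by (simp add: uniform_mixture_def)
  show "uniform_mixture L c t = 0" if "t \<notin> blotto_S N K" for t
  proof -
    have "{u. u \<le> L \<and> c u = t} = {}" using assms that by auto
    thus ?thesis by (simp add: uniform_mixture_def)
  qed
  show "(\<Sum>t\<in>blotto_S N K. uniform_mixture L c t) = 1"
    using sum_uniform_mixture[OF assms, of "\<lambda>_. 1"] by simp
qed

lemma uniform_mixture_pos: "0 < uniform_mixture L c (c 0)"
proof -
  have "0 < card {u. u \<le> L \<and> c u = c 0}"
    by (rule card_gt_0_iff[THEN iffD2]) auto
  thus ?thesis by (simp add: uniform_mixture_def)
qed

lemma sum_atMost_battle_payoff: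
  "(\<Sum>v\<le>L. (if v < x then 1 else 0) + 1 / 2 * (if x = v then 1 else 0 :: real))
     = (if x \<le> L then real x + 1 / 2 else real L + 1)"
  by (induction L) auto

lemma pure_payoff_uniform_mixture:
  assumes "latin_family N K L c"
  shows "pure_payoff 1 N K (uniform_mixture L c) t
           = (\<Sum>k<K. if t k \<le> L then real (t k) + 1 / 2 else real L + 1) / (real L + 1)"
proof -
  have rows: "\<forall>u\<le>L. c u \<in> blotto_S N K" and columns: "\<And>k. k < K \<Longrightarrow> bij_betw (\<lambda>u. c u k) {..L} {..L}"
    using assms by (auto simp: latin_family_def)
  define w where "w x v = (if v < x then 1 else 0) + 1 / 2 * (if x = v then 1 else 0 :: real)" for x v :: nat
  have "(\<Sum>u\<le>L. blotto_payoff 1 K t (c u)) = (\<Sum>k<K. \<Sum>u\<le>L. w (t k) (c u k))"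
    unfolding blotto_payoff_def w_def by (subst sum.swap) simp
  also have "\<dots> = (\<Sum>k<K. \<Sum>v\<le>L. w (t k) v)"
  proof (rule sum.cong[OF refl])
    fix k assume "k \<in> {..<K}"
    thus "(\<Sum>u\<le>L. w (t k) (c u k)) = (\<Sum>v\<le>L. w (t k) v)"
      using columns by (intro sum.reindex_bij_betw) auto
  qed
  also have "\<dots> = (\<Sum>k<K. if t k \<le> L then real (t k) + 1 / 2 else real L + 1)"
    unfolding w_def sum_atMost_battle_payoff ..
  finally show ?thesis
    unfolding pure_payoff_def sum_uniform_mixture[OF rows] by simp
qed

lemma sum_allocation_plus_half:
  assumes "2 * N = K * L" "t \<in> blotto_S N K"
  shows "(\<Sum>k<K. real (t k) + 1 / 2) / (real L + 1) = real K / 2"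
proof -
  have "(\<Sum>k<K. real (t k) + 1 / 2) = real N + real K / 2"
    using assms(2) by (simp add: sum.distrib blotto_S_def flip: of_nat_sum)
  also have "\<dots> = real K / 2 * (real L + 1)"
    using arg_cong[OF assms(1), of real] by (simp add: algebra_simps)
  finally show ?thesis by simp
qed

lemma pure_payoff_uniform_mixture_le_half:
  assumes "latin_family N K L c" "2 * N = K * L" "t \<in> blotto_S N K"
  shows "pure_payoff 1 N K (uniform_mixture L c) t \<le> real K / 2"
proof -
  have "pure_payoff 1 N K (uniform_mixture L c) t
          = (\<Sum>k<K. if t k \<le> L then real (t k) + 1 / 2 else real L + 1) / (real L + 1)"
    using assms(1) by (rule pure_payoff_uniform_mixture)
  also have "\<dots> \<le> (\<Sum>k<K. real (t k) + 1 / 2) / (real L + 1)"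
    by (intro divide_right_mono sum_mono) auto
  also have "\<dots> = real K / 2"
    using assms(2,3) by (rule sum_allocation_plus_half)
  finally show ?thesis .
qed

lemma pure_payoff_uniform_mixture_less_half:
  assumes "latin_family N K L c" "2 * N = K * L" "t \<in> blotto_S N K" "k < K" "L < t k"
  shows "pure_payoff 1 N K (uniform_mixture L c) t < real K / 2"
proof -
  have "pure_payoff 1 N K (uniform_mixture L c) t
          = (\<Sum>k<K. if t k \<le> L then real (t k) + 1 / 2 else real L + 1) / (real L + 1)"
    using assms(1) by (rule pure_payoff_uniform_mixture)
  also have "\<dots> < (\<Sum>k<K. real (t k) + 1 / 2) / (real L + 1)"
    using assms(4,5)
    by (intro divide_strict_right_mono sum_strict_mono_ex1) (auto intro!: bexI[of _ k])
  also have "\<dots> = real K / 2"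
    using assms(2,3) by (rule sum_allocation_plus_half)
  finally show ?thesis .
qed

lemma nash_uniform_mixture:
  assumes "latin_family N K L c" "2 * N = K * L"
  shows "nash 1 N K (uniform_mixture L c) (uniform_mixture L c)"
  using assms pure_payoff_uniform_mixture_le_half
  by (intro nash_if_pure_payoff_le_half mixed_uniform_mixture) (auto simp: latin_family_def)

lemma nash_zero_if_exceeds:
  assumes "latin_family N K L c" "2 * N = K * L" "nash 1 N K \<sigma>A \<sigma>B"
    and "s \<in> blotto_S N K" "k < K" "L < s k"
  shows "\<sigma>A s = 0 \<and> \<sigma>B s = 0"
proof -
  have \<tau>: "mixed N K (uniform_mixture L c)"
    using assms(1) by (simp add: latin_family_def mixed_uniform_mixture)
  note le = pure_payoff_uniform_mixture_le_half[OF assms(1,2)]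
  note less = pure_payoff_uniform_mixture_less_half[OF assms(1,2,4-6)]
  show ?thesis
    using nash_zero_if_pure_payoff_less_half[OF assms(3) \<tau> le assms(4) less]
      nash_zero_if_pure_payoff_less_half[OF nash_swap[OF assms(3)] \<tau> le assms(4) less]
    by simp
qed

section \<open>Latin families through a given allocation\<close>

lemma sum_lessThan_in_pairs:
  fixes f :: "nat \<Rightarrow> 'a::comm_monoid_add"
  shows "(\<Sum>k<2 * H. f k) = (\<Sum>m<H. f (2 * m) + f (2 * m + 1))"
  by (induction H) (simp_all add: add.assoc)

lemma interval_iff_mod_less:
  fixes j p l L :: int
  assumes "0 \<le> j" "j < L" "0 \<le> p" "0 \<le> l" "p + l \<le> L"
  shows "(p \<le> j \<and> j < p + l) \<longleftrightarrow> (j - p) mod L < l"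
proof (cases "p \<le> j")
  case True
  hence "(j - p) mod L = j - p" using assms by (intro mod_pos_pos_trivial) auto
  thus ?thesis using True by auto
next
  case False
  have "(j - p) mod L = (j - p + L) mod L" by simp
  also have "\<dots> = j - p + L" using False assms by (intro mod_pos_pos_trivial) auto
  finally show ?thesis using False assms by auto
qed

lemma card_residue_in_interval:
  fixes P l M r :: int
  assumes "0 \<le> r" "r < M" "l \<le> M"
  shows "card {x. P \<le> x \<and> x < P + l \<and> x mod M = r} = of_bool ((r - P) mod M < l)"
proof -
  have "x = P + (r - P) mod M \<and> (r - P) mod M < l" if "P \<le> x" "x < P + l" "x mod M = r" for x
  proof -
    have "(x - P) mod M = x - P" using that assms by (intro mod_pos_pos_trivial) auto
    moreover have "(x - P) mod M = (r - P) mod M"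
      using that(3) by (metis mod_diff_left_eq)
    ultimately show ?thesis using that by auto
  qed
  moreover have "(P + (r - P) mod M) mod M = r"
    using assms by (metis add.commute diff_add_cancel mod_add_left_eq mod_pos_pos_trivial)
  moreover have "0 \<le> (r - P) mod M" using assms by simp
  ultimately have "{x. P \<le> x \<and> x < P + l \<and> x mod M = r}
      = (if (r - P) mod M < l then {P + (r - P) mod M} else {})"
    by auto
  thus ?thesis by simp
qed

text \<open>Segments of lengths l 0, l 1, \<dots> laid end to end starting at 0: each one, being no
  longer than M, contains at most one number congruent to r modulo M.\<close>
lemma card_residue_below_sum:
  fixes l :: "nat \<Rightarrow> int" and M r :: int
  assumes "0 \<le> r" "r < M" "\<And>m. 0 \<le> l m \<and> l m \<le> M"
  shows "(\<Sum>m<n. of_bool ((r - (\<Sum>i<m. l i)) mod M < l m))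
       = int (card {x. 0 \<le> x \<and> x < (\<Sum>i<n. l i) \<and> x mod M = r})"
proof (induction n)
  case 0
  show ?case by (auto simp: card_eq_0_iff)
next
  case (Suc n)
  define P where "P = (\<Sum>i<n. l i)"
  have "0 \<le> P" unfolding P_def using assms by (simp add: sum_nonneg)
  hence split: "{x. 0 \<le> x \<and> x < P + l n \<and> x mod M = r}
      = {x. 0 \<le> x \<and> x < P \<and> x mod M = r} \<union> {x. P \<le> x \<and> x < P + l n \<and> x mod M = r}"
    using assms(3) by (auto intro: order.strict_trans2[of _ P])
  have "card {x. 0 \<le> x \<and> x < P + l n \<and> x mod M = r}
     = card {x. 0 \<le> x \<and> x < P \<and> x mod M = r} + card {x. P \<le> x \<and> x < P + l n \<and> x mod M = r}"
    unfolding split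
    by (rule card_Un_disjoint)
       (auto intro: finite_subset[of _ "{0..<P}"] finite_subset[of _ "{P..<P + l n}"])
  thus ?case
    using Suc card_residue_in_interval[of r M "l n" P] assms by (simp add: P_def)
qed

text \<open>succ_above a maps 0, \<dots>, L - 1 increasingly onto {0..L} - {a}.\<close>
definition succ_above :: "int \<Rightarrow> int \<Rightarrow> int" where
  "succ_above a j = (if a \<le> j then j + 1 else j)"

lemma succ_above_bounds:
  assumes "0 \<le> j" "j < L"
  shows "0 \<le> succ_above a j" "succ_above a j \<le> L" "succ_above a j \<noteq> a"
  using assms by (auto simp: succ_above_def)

lemma succ_above_inj: "succ_above a j = succ_above a j' \<Longrightarrow> j = j'"
  by (auto simp: succ_above_def split: if_splits)

lemma succ_above_add_succ_above_reflect:
  "succ_above a j + succ_above b (L - 1 - j)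
     = L + of_bool (a \<le> j \<and> j < L - b) - of_bool (L - b \<le> j \<and> j < a)"
  by (auto simp: succ_above_def)

locale pairing_construction =
  fixes H L :: nat and s :: "nat \<Rightarrow> nat"
  assumes L_pos: "0 < L" and s_le: "\<And>k. s k \<le> L"
begin

definition excess :: "nat \<Rightarrow> int" where
  "excess m = int (s (2 * m)) + int (s (2 * m + 1)) - int L"

definition surplus :: "nat \<Rightarrow> int" where
  "surplus m = max (excess m) 0"

definition deficit :: "nat \<Rightarrow> int" where
  "deficit m = max (- excess m) 0"

text \<open>The pair m sums to L except on a window of |excess m| consecutive slots; the offsets lay
  the windows of the pairs with a surplus end to end around the cycle of slots, and likewise
  those with a deficit.\<close>
definition offset :: "nat \<Rightarrow> int" where
  "offset m = (if 0 \<le> excess m then (\<Sum>i<m. surplus i) - (int L - int (s (2 * m + 1)))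
               else (\<Sum>i<m. deficit i) - int (s (2 * m)))"

definition slot :: "nat \<Rightarrow> nat \<Rightarrow> int" where
  "slot m u = (int u - 1 - offset m) mod int L"

definition entry :: "nat \<Rightarrow> nat \<Rightarrow> int" where
  "entry u k = succ_above (int (s k))
     (if even k then slot (k div 2) u else int L - 1 - slot (k div 2) u)"

definition allocation :: "nat \<Rightarrow> nat \<Rightarrow> nat" where
  "allocation u k = (if u = 0 then s k else if k < 2 * H then nat (entry u k) else 0)"

lemma allocation_0: "allocation 0 = s"
  by (simp add: allocation_def fun_eq_iff)

lemma slot_bounds: "0 \<le> slot m u" "slot m u < int L"
  using L_pos by (simp_all add: slot_def)

lemma slot_inj:
  assumes "u \<in> {1..L}" "u' \<in> {1..L}" "slot m u = slot m u'"
  shows "u = u'"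
proof (rule ccontr)
  assume "u \<noteq> u'"
  moreover have "int L dvd (int u - 1 - offset m) - (int u' - 1 - offset m)"
    using assms(3) unfolding slot_def by (simp only: mod_eq_dvd_iff)
  ultimately have "int L \<le> \<bar>int u - int u'\<bar>"
    using dvd_imp_le_int[of "int u - int u'" "int L"] by simp
  thus False using assms(1,2) by auto
qed

lemma entry_bounds: "0 \<le> entry u k" "entry u k \<le> int L" "entry u k \<noteq> int (s k)"
  using slot_bounds[of "k div 2" u] succ_above_bounds[of _ "int L"]
  by (simp_all add: entry_def)

lemma entry_inj:
  assumes "u \<in> {1..L}" "u' \<in> {1..L}" "entry u k = entry u' k"
  shows "u = u'"
proof -
  have "slot (k div 2) u = slot (k div 2) u'"
    using assms(3) unfolding entry_def by (cases "even k") (auto dest: succ_above_inj)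
  thus ?thesis using assms(1,2) by (rule slot_inj[rotated 2])
qed

lemma int_allocation: "u \<noteq> 0 \<Longrightarrow> k < 2 * H \<Longrightarrow> int (allocation u k) = entry u k"
  using entry_bounds(1) by (simp add: allocation_def)

lemma bij_betw_allocation_column:
  assumes "k < 2 * H"
  shows "bij_betw (\<lambda>u. allocation u k) {..L} {..L}"
proof -
  have into: "(\<lambda>u. allocation u k) ` {..L} \<subseteq> {..L}"
    using s_le entry_bounds(2) by (auto simp: allocation_def nat_le_iff)
  have "inj_on (\<lambda>u. allocation u k) {..L}"
  proof (rule inj_onI)
    fix u u' assume u: "u \<in> {..L}" and u': "u' \<in> {..L}"
      and eq: "allocation u k = allocation u' k"
    have "int (allocation v k) \<noteq> int (s k)" if "v \<noteq> 0" for v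
      using int_allocation[OF that assms] entry_bounds(3) by simp
    hence "u = 0 \<longleftrightarrow> u' = 0"
      using eq by (metis allocation_def)
    moreover have "entry u k = entry u' k" if "u \<noteq> 0" "u' \<noteq> 0"
      using eq int_allocation[OF _ assms] that by metis
    ultimately show "u = u'"
      using entry_inj[of u u' k] u u' by (cases "u = 0") auto
  qed
  with into show ?thesis
    by (simp add: bij_betw_def endo_inj_surj)
qed

lemma entry_pair_sum:
  "entry u (2 * m) + entry u (2 * m + 1)
     = int L + of_bool ((int u - 1 - (\<Sum>i<m. deficit i)) mod int L < deficit m)
             - of_bool ((int u - 1 - (\<Sum>i<m. surplus i)) mod int L < surplus m)"
proof -
  define a b j where "a = int (s (2 * m))" and "b = int (s (2 * m + 1))" and "j = slot m u"
  have bounds: "0 \<le> a" "a \<le> int L" "0 \<le> b" "b \<le> int L" "0 \<le> j" "j < int L"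
    using s_le slot_bounds unfolding a_def b_def j_def by auto
  have shift: "(j - p) mod int L = (int u - 1 - (offset m + p)) mod int L" for p
    unfolding j_def slot_def by (simp add: mod_diff_left_eq algebra_simps)
  have "entry u (2 * m) + entry u (2 * m + 1) = succ_above a j + succ_above b (int L - 1 - j)"
    by (simp add: entry_def a_def b_def j_def)
  also have "\<dots> = int L + of_bool (a \<le> j \<and> j < int L - b) - of_bool (int L - b \<le> j \<and> j < a)"
    by (rule succ_above_add_succ_above_reflect)
  also have "\<dots> = int L + of_bool ((int u - 1 - (\<Sum>i<m. deficit i)) mod int L < deficit m)
             - of_bool ((int u - 1 - (\<Sum>i<m. surplus i)) mod int L < surplus m)"
  proof (cases "0 \<le> excess m")
    case True
    have "(int L - b \<le> j \<and> j < a) \<longleftrightarrow> (j - (int L - b)) mod int L < surplus m"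
      using interval_iff_mod_less[of j "int L" "int L - b" "excess m"] bounds True
      by (simp add: surplus_def excess_def a_def b_def)
    moreover have "\<not> (int u - 1 - (\<Sum>i<m. deficit i)) mod int L < deficit m"
      using True L_pos by (simp add: deficit_def not_less)
    ultimately show ?thesis
      using True shift[of "int L - b"] by (simp add: offset_def excess_def a_def b_def)
  next
    case False
    have "(a \<le> j \<and> j < int L - b) \<longleftrightarrow> (j - a) mod int L < deficit m"
      using interval_iff_mod_less[of j "int L" a "- excess m"] bounds False
      by (simp add: deficit_def excess_def a_def b_def)
    moreover have "\<not> (int u - 1 - (\<Sum>i<m. surplus i)) mod int L < surplus m"
      using False L_pos by (simp add: surplus_def not_less)
    ultimately show ?thesis
      using False shift[of a] by (simp add: offset_def excess_def a_def b_def)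
  qed
  finally show ?thesis .
qed

lemma sum_surplus_eq_sum_deficit:
  assumes "s \<in> blotto_S (H * L) (2 * H)"
  shows "(\<Sum>m<H. surplus m) = (\<Sum>m<H. deficit m)"
proof -
  have "surplus m - deficit m = excess m" for m
    by (simp add: surplus_def deficit_def max_def)
  hence "(\<Sum>m<H. surplus m) - (\<Sum>m<H. deficit m) = (\<Sum>m<H. excess m)"
    by (simp flip: sum_subtractf)
  also have "\<dots> = (\<Sum>k<2 * H. int (s k)) - int (H * L)"
    by (simp add: excess_def sum_lessThan_in_pairs sum_subtractf sum.distrib)
  also have "\<dots> = 0"
    using assms by (simp add: blotto_S_def flip: of_nat_sum)
  finally show ?thesis by simp
qed

lemma sum_entry:
  assumes "s \<in> blotto_S (H * L) (2 * H)" "u \<in> {1..L}"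
  shows "(\<Sum>k<2 * H. entry u k) = int (H * L)"
proof -
  define r where "r = int u - 1"
  have r: "0 \<le> r" "r < int L" using assms(2) by (auto simp: r_def)
  have parts: "\<And>m. 0 \<le> surplus m \<and> surplus m \<le> int L" "\<And>m. 0 \<le> deficit m \<and> deficit m \<le> int L"
    using s_le by (auto simp: surplus_def deficit_def excess_def intro: add_mono[of _ "int L" _ "int L", simplified])
  define hit :: "(nat \<Rightarrow> int) \<Rightarrow> nat \<Rightarrow> int"
    where "hit l m = of_bool ((r - (\<Sum>i<m. l i)) mod int L < l m)" for l m
  have "(\<Sum>k<2 * H. entry u k) = (\<Sum>m<H. int L + hit deficit m - hit surplus m)"
    unfolding sum_lessThan_in_pairs entry_pair_sum hit_def r_def ..
  also have "\<dots> = int H * int L + (\<Sum>m<H. hit deficit m) - (\<Sum>m<H. hit surplus m)"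
    by (simp add: sum.distrib sum_subtractf)
  also have "(\<Sum>m<H. hit deficit m) = (\<Sum>m<H. hit surplus m)"
    unfolding hit_def card_residue_below_sum[OF r parts(1)] card_residue_below_sum[OF r parts(2)]
    using sum_surplus_eq_sum_deficit[OF assms(1)] by simp
  finally show ?thesis by simp
qed

lemma latin_family_allocation:
  assumes "s \<in> blotto_S (H * L) (2 * H)"
  shows "latin_family (H * L) (2 * H) L allocation"
  unfolding latin_family_def
proof (intro conjI allI impI bij_betw_allocation_column)
  fix u assume "u \<le> L"
  show "allocation u \<in> blotto_S (H * L) (2 * H)"
  proof (cases "u = 0")
    case True
    thus ?thesis using assms by (simp add: allocation_0)
  next
    case False
    have "int (\<Sum>k<2 * H. allocation u k) = (\<Sum>k<2 * H. entry u k)"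
      using int_allocation[OF False] by simp
    also have "\<dots> = int (H * L)"
      using assms False \<open>u \<le> L\<close> by (intro sum_entry) auto
    finally have "(\<Sum>k<2 * H. allocation u k) = H * L"
      by (simp only: of_nat_eq_iff)
    moreover have "\<forall>k. 2 * H \<le> k \<longrightarrow> allocation u k = 0"
      using False by (simp add: allocation_def)
    ultimately show ?thesis
      by (simp add: blotto_S_def)
  qed
qed

end

lemma latin_family_through:
  assumes "K = 2 * H" "N = H * L" "0 < L" "s \<in> blotto_S N K" "\<forall>k<K. s k \<le> L"
  shows "\<exists>c. latin_family N K L c \<and> c 0 = s"
proof -
  have "s k \<le> L" for k
    using assms(4,5) by (cases "k < K") (auto simp: blotto_S_def)
  then interpret pairing_construction H L s
    using assms(3) by unfold_locales
  show ?thesis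
    using latin_family_allocation allocation_0 assms(1,2,4) by blast
qed

theorem corollary4:
  fixes N K :: nat and s :: "nat \<Rightarrow> nat"
  assumes "N \<ge> 1" and "K \<ge> 2" and "even K" and "K dvd N"
    and "s \<in> blotto_S N K"
  shows "(\<exists>\<sigma>A \<sigma>B. nash 1 N K \<sigma>A \<sigma>B \<and> (\<sigma>A s > 0 \<or> \<sigma>B s > 0))
         \<longleftrightarrow> (\<forall>k<K. real (s k) \<le> 2 * real N / real K)"
proof -
  obtain H where K: "K = 2 * H" using \<open>even K\<close> by (auto elim: evenE)
  obtain n where N: "N = K * n" using \<open>K dvd N\<close> by (rule dvdE)
  define L where "L = 2 * n"
  have "0 < L" using \<open>N \<ge> 1\<close> N by (simp add: L_def)
  have NHL: "N = H * L" and NKL: "2 * N = K * L" using K N by (simp_all add: L_def)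
  have "2 * real N / real K = real L" using \<open>K \<ge> 2\<close> N by (simp add: L_def field_simps)
  hence bound: "(\<forall>k<K. real (s k) \<le> 2 * real N / real K) \<longleftrightarrow> (\<forall>k<K. s k \<le> L)" by simp
  define u where "u k = (if k < K then n else 0)" for k
  have "u \<in> blotto_S N K" "\<forall>k<K. u k \<le> L"
    using N by (simp_all add: blotto_S_def u_def L_def)
  then obtain c0 where c0: "latin_family N K L c0"
    using latin_family_through[OF K NHL \<open>0 < L\<close>] by blast
  show ?thesis
  proof
    assume "\<exists>\<sigma>A \<sigma>B. nash 1 N K \<sigma>A \<sigma>B \<and> (\<sigma>A s > 0 \<or> \<sigma>B s > 0)"
    thus "\<forall>k<K. real (s k) \<le> 2 * real N / real K"
      using nash_zero_if_exceeds[OF c0 NKL _ assms(5)] unfolding bound by (metis less_irrefl not_le)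
  next
    assume "\<forall>k<K. real (s k) \<le> 2 * real N / real K"
    then obtain c where "latin_family N K L c" "c 0 = s"
      using latin_family_through[OF K NHL \<open>0 < L\<close> assms(5)] bound by blast
    thus "\<exists>\<sigma>A \<sigma>B. nash 1 N K \<sigma>A \<sigma>B \<and> (\<sigma>A s > 0 \<or> \<sigma>B s > 0)"
      using nash_uniform_mixture[OF _ NKL] uniform_mixture_pos by metis
  qed
qed

end
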